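(* Let $G'$ be any orientation of a series-parallel graph $G$. Then $\chi'_o(G')\le 7$.
   Context: An orientation of an undirected graph replaces each edge $\{u,v\}$ by exactly one of the arcs $(u,v)$, $(v,u)$. An oriented $r$-arc-coloring of a digraph $G=(V,E)$ is a map $c:E\to\{1,\dots,r\}$ such that (i) $c((u,v))\ne c((v,w))$ for every two arcs $(u,v),(v,w)\in E$, and (ii) $c((u,v))\ne c((y,z))$ for all arcs $(u,v),(v,w),(x,y),(y,z)\in E$ with $c((v,w))=c((x,y))$; $\chi'_o(G)$ is the smallest such $r$. Two-terminal series-parallel multigraphs with terminals $(s,t)$ are defined recursively: a single edge $\{s,t\}$ with $s\ne t$ is one; if $(G_1,s_1,t_1),(G_2,s_2,t_2)$ are vertex-disjoint ones, then the parallel composition (identify $s_1$ with $s_2$ and $t_1$ with $t_2$) with terminals $(s_1,t_1)$, and the series composition (identify $t_1$ with $s_2$) with terminals $(s_1,t_2)$, are again ones. A (simple) graph is series-parallel if it is obtained from a two-terminal series-parallel multigraph by merging parallel edges. *)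

theory Defs
  imports Main
begin

text \<open>Simple undirected graphs: a vertex set V and an edge set E of 2-element sets.
  Two-terminal series-parallel graphs (after merging parallel edges) are generated
  inductively; vertex-disjointness of the components is expressed by requiring that
  the two vertex sets meet exactly in the identified terminals.
  Since parallel edges are merged, edge sets are combined by union.\<close>

inductive sp_two_terminal :: "'a set \<Rightarrow> 'a set set \<Rightarrow> 'a \<Rightarrow> 'a \<Rightarrow> bool" where
  sp_edge: "s \<noteq> t \<Longrightarrow> sp_two_terminal {s, t} {{s, t}} s t"
| sp_parallel: "sp_two_terminal V1 E1 s t \<Longrightarrow> sp_two_terminal V2 E2 s t \<Longrightarrow>
     V1 \<inter> V2 = {s, t} \<Longrightarrow> sp_two_terminal (V1 \<union> V2) (E1 \<union> E2) s t"
| sp_series: "sp_two_terminal V1 E1 s m \<Longrightarrow> sp_two_terminal V2 E2 m t \<Longrightarrow>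
     V1 \<inter> V2 = {m} \<Longrightarrow> sp_two_terminal (V1 \<union> V2) (E1 \<union> E2) s t"

definition series_parallel :: "'a set \<Rightarrow> 'a set set \<Rightarrow> bool" where
  "series_parallel V E \<longleftrightarrow> (\<exists>s t. sp_two_terminal V E s t)"

definition orientation :: "'a set set \<Rightarrow> ('a \<times> 'a) set \<Rightarrow> bool" where
  "orientation E A \<longleftrightarrow>
     (\<forall>u v. {u, v} \<in> E \<and> u \<noteq> v \<longrightarrow> ((u, v) \<in> A \<longleftrightarrow> (v, u) \<notin> A)) \<and>
     (\<forall>u v. (u, v) \<in> A \<longrightarrow> u \<noteq> v \<and> {u, v} \<in> E)"

definition oriented_arc_coloring :: "('a \<times> 'a) set \<Rightarrow> nat \<Rightarrow> ('a \<times> 'a \<Rightarrow> nat) \<Rightarrow> bool" where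
  "oriented_arc_coloring A r c \<longleftrightarrow>
     (\<forall>a\<in>A. c a \<in> {1..r}) \<and>
     (\<forall>u v w. (u, v) \<in> A \<and> (v, w) \<in> A \<longrightarrow> c (u, v) \<noteq> c (v, w)) \<and>
     (\<forall>u v w x y z. (u, v) \<in> A \<and> (v, w) \<in> A \<and> (x, y) \<in> A \<and> (y, z) \<in> A \<and>
        c (v, w) = c (x, y) \<longrightarrow> c (u, v) \<noteq> c (y, z))"

definition oriented_chromatic_index :: "('a \<times> 'a) set \<Rightarrow> nat" where
  "oriented_chromatic_index A = (LEAST r. \<exists>c. oriented_arc_coloring A r c)"

end

theory Submission
  imports Defs
begin

text \<open>The target is the Paley tournament on \<open>\<int>/7\<int>\<close>, where \<open>a \<rightarrow> b\<close> iff \<open>b - a\<close> is a nonzero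
  square mod 7. For any two distinct vertices and any choice of the two arc directions it has a
  common neighbour realising them, and this is exactly what is needed to extend a homomorphism
  across a series composition; parallel compositions just glue homomorphisms that agree on the
  terminals. So every orientation of a series-parallel graph maps homomorphically into it.
  Colouring each arc by the image of its head is then an oriented arc colouring: consecutive arcs
  get the heads of an arc of the tournament, and condition (ii) would force a 2-cycle.\<close>

definition arc_hom_on :: "('a \<times> 'a) set \<Rightarrow> 'a set set \<Rightarrow> ('b \<Rightarrow> 'b \<Rightarrow> bool) \<Rightarrow> ('a \<Rightarrow> 'b) \<Rightarrow> bool"
  where "arc_hom_on A E T f \<longleftrightarrow> (\<forall>u v. (u, v) \<in> A \<longrightarrow> {u, v} \<in> E \<longrightarrow> T (f u) (f v))"

definition two_extension_property :: "'b set \<Rightarrow> ('b \<Rightarrow> 'b \<Rightarrow> bool) \<Rightarrow> bool"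
  where "two_extension_property W T \<longleftrightarrow>
    (\<forall>p\<in>W. \<forall>q\<in>W. p \<noteq> q \<longrightarrow> (\<forall>b1 b2. \<exists>r\<in>W.
       (if b1 then T p r else T r p) \<and> (if b2 then T r q else T q r)))"

definition paley7 :: "nat \<Rightarrow> nat \<Rightarrow> bool"
  where "paley7 a b \<longleftrightarrow> a < 7 \<and> b < 7 \<and> (b + 7 - a) mod 7 \<in> {1, 2, 4}"

lemma paley7_less: "paley7 a b \<Longrightarrow> a < 7 \<and> b < 7"
  unfolding paley7_def by blast

lemma less_7_iff: "(a :: nat) < 7 \<longleftrightarrow> a \<in> {0, 1, 2, 3, 4, 5, 6}"
  by auto

lemma asymp_paley7: "asymp paley7"
  by (rule asympI) (auto simp: paley7_def less_7_iff)

lemma two_extension_property_paley7: "two_extension_property {..<7} paley7"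
proof -
  have "{..<7 :: nat} = {0, 1, 2, 3, 4, 5, 6}"
    by auto
  then show ?thesis
    unfolding two_extension_property_def paley7_def by simp
qed

lemma sp_two_terminal_vertices:
  assumes "sp_two_terminal V E s t"
  shows "s \<in> V" "t \<in> V" "\<forall>e\<in>E. e \<subseteq> V"
  using assms by (induction rule: sp_two_terminal.induct) auto

lemma arc_hom_on_glue:
  assumes "arc_hom_on A E1 T f1" "arc_hom_on A E2 T f2"
    and "\<forall>e\<in>E1. e \<subseteq> V1" "\<forall>e\<in>E2. e \<subseteq> V2"
    and "\<forall>x\<in>V1 \<inter> V2. f1 x = f2 x"
  shows "arc_hom_on A (E1 \<union> E2) T (\<lambda>x. if x \<in> V1 then f1 x else f2 x)"
proof -
  have on_V2: "(if x \<in> V1 then f1 x else f2 x) = f2 x" if "x \<in> V2" for x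
    using assms(5) that by auto
  show ?thesis
    unfolding arc_hom_on_def
  proof (intro allI impI)
    fix u v assume uv: "(u, v) \<in> A" "{u, v} \<in> E1 \<union> E2"
    show "T (if u \<in> V1 then f1 u else f2 u) (if v \<in> V1 then f1 v else f2 v)"
    proof (cases "{u, v} \<in> E1")
      case True
      then have "u \<in> V1" "v \<in> V1"
        using assms(3) by auto
      with True uv assms(1) show ?thesis
        unfolding arc_hom_on_def by simp
    next
      case False
      then have "{u, v} \<in> E2"
        using uv by simp
      moreover from this have "u \<in> V2" "v \<in> V2"
        using assms(4) by auto
      ultimately show ?thesis
        using uv assms(2) on_V2 unfolding arc_hom_on_def by simp
    qed
  qed
qed

lemma two_extension_property_obtain:
  assumes "two_extension_property W T" "asymp T" "asym A"
    and "p \<in> W" "q \<in> W" "p \<noteq> q"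
  obtains r where "r \<in> W" "r \<noteq> p" "r \<noteq> q"
    "(s, m) \<in> A \<longrightarrow> T p r" "(m, s) \<in> A \<longrightarrow> T r p"
    "(m, t) \<in> A \<longrightarrow> T r q" "(t, m) \<in> A \<longrightarrow> T q r"
proof -
  obtain r where r: "r \<in> W"
    "if (s, m) \<in> A then T p r else T r p" "if (m, t) \<in> A then T r q else T q r"
    using assms(1,4-6) unfolding two_extension_property_def
    by (elim ballE allE[of _ "(s, m) \<in> A"] allE[of _ "(m, t) \<in> A"]) blast+
  have irrefl: "\<not> T x x" for x
    using asympD[OF assms(2)] by blast
  show thesis
  proof (rule that)
    show "r \<noteq> p"
      using r(2) irrefl by (cases "(s, m) \<in> A") auto
    show "r \<noteq> q"
      using r(3) irrefl by (cases "(m, t) \<in> A") auto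
    show "(s, m) \<in> A \<longrightarrow> T p r" "(m, t) \<in> A \<longrightarrow> T r q"
      using r(2,3) by simp_all
    show "(m, s) \<in> A \<longrightarrow> T r p" "(t, m) \<in> A \<longrightarrow> T q r"
      using r(2,3) asymD[OF assms(3)] by (auto split: if_splits)
  qed (rule r(1))
qed

text \<open>The terminals may be sent to any two distinct vertices compatible with a possible arc
  between them; this freedom is the induction hypothesis the series step needs.\<close>

lemma sp_two_terminal_arc_hom:
  assumes "sp_two_terminal V E s t"
    and T: "two_extension_property W T" "asymp T" and "asym A"
    and "p \<in> W" "q \<in> W" "p \<noteq> q" "(s, t) \<in> A \<longrightarrow> T p q" "(t, s) \<in> A \<longrightarrow> T q p"
  shows "\<exists>f. f s = p \<and> f t = q \<and> arc_hom_on A E T f"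
  using assms(1,5-)
proof (induction arbitrary: p q rule: sp_two_terminal.induct)
  case (sp_edge s t)
  have "arc_hom_on A {{s, t}} T (\<lambda>x. if x = s then p else q)"
    using sp_edge unfolding arc_hom_on_def by (auto simp: doubleton_eq_iff)
  with sp_edge.hyps show ?case
    by (intro exI[of _ "\<lambda>x. if x = s then p else q"]) simp
next
  case (sp_parallel V1 E1 s t V2 E2)
  obtain f1 where f1: "f1 s = p" "f1 t = q" "arc_hom_on A E1 T f1"
    using sp_parallel.IH(1) sp_parallel.prems by blast
  obtain f2 where f2: "f2 s = p" "f2 t = q" "arc_hom_on A E2 T f2"
    using sp_parallel.IH(2) sp_parallel.prems by blast
  have "\<forall>x\<in>V1 \<inter> V2. f1 x = f2 x"
    using f1 f2 sp_parallel.hyps(3) by auto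
  then have "arc_hom_on A (E1 \<union> E2) T (\<lambda>x. if x \<in> V1 then f1 x else f2 x)"
    using f1(3) f2(3) sp_two_terminal_vertices(3)[OF sp_parallel.hyps(1)]
      sp_two_terminal_vertices(3)[OF sp_parallel.hyps(2)] by (intro arc_hom_on_glue)
  moreover have "s \<in> V1" "t \<in> V1"
    using sp_two_terminal_vertices[OF sp_parallel.hyps(1)] by simp_all
  ultimately show ?case
    using f1 by (intro exI[of _ "\<lambda>x. if x \<in> V1 then f1 x else f2 x"]) simp
next
  case (sp_series V1 E1 s m V2 E2 t)
  obtain r where r: "r \<in> W" "r \<noteq> p" "r \<noteq> q"
    "(s, m) \<in> A \<longrightarrow> T p r" "(m, s) \<in> A \<longrightarrow> T r p"
    "(m, t) \<in> A \<longrightarrow> T r q" "(t, m) \<in> A \<longrightarrow> T q r"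
    by (rule two_extension_property_obtain[OF T \<open>asym A\<close> sp_series.prems(1-3)])
  obtain f1 where f1: "f1 s = p" "f1 m = r" "arc_hom_on A E1 T f1"
    using sp_series.IH(1)[OF sp_series.prems(1) r(1) r(2)[symmetric] r(4,5)] by blast
  obtain f2 where f2: "f2 m = r" "f2 t = q" "arc_hom_on A E2 T f2"
    using sp_series.IH(2)[OF r(1) sp_series.prems(2) r(3,6,7)] by blast
  have "\<forall>x\<in>V1 \<inter> V2. f1 x = f2 x"
    using f1 f2 sp_series.hyps(3) by auto
  then have "arc_hom_on A (E1 \<union> E2) T (\<lambda>x. if x \<in> V1 then f1 x else f2 x)"
    using f1(3) f2(3) sp_two_terminal_vertices(3)[OF sp_series.hyps(1)]
      sp_two_terminal_vertices(3)[OF sp_series.hyps(2)] by (intro arc_hom_on_glue)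
  moreover have "t \<notin> V1"
  proof -
    have "t \<noteq> m"
      using f2(1,2) r(3) by auto
    then show ?thesis
      using sp_series.hyps(3) sp_two_terminal_vertices(2)[OF sp_series.hyps(2)] by blast
  qed
  moreover have "s \<in> V1"
    using sp_two_terminal_vertices[OF sp_series.hyps(1)] by simp
  ultimately show ?case
    using f1 f2 by (intro exI[of _ "\<lambda>x. if x \<in> V1 then f1 x else f2 x"]) simp
qed

lemma oriented_arc_coloring_of_hom:
  assumes hom: "\<And>u v. (u, v) \<in> A \<Longrightarrow> T (f u) (f v)"
    and range: "\<And>a b. T a b \<Longrightarrow> a < n \<and> b < n" and "asymp T"
  shows "oriented_arc_coloring A n (\<lambda>a. f (snd a) + 1)"
  unfolding oriented_arc_coloring_def
proof (intro conjI allI impI ballI)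
  fix a assume "a \<in> A"
  then have "T (f (fst a)) (f (snd a))"
    using hom by (cases a) simp
  then show "f (snd a) + 1 \<in> {1..n}"
    using range by fastforce
next
  fix u v w assume "(u, v) \<in> A \<and> (v, w) \<in> A"
  then have "T (f v) (f w)"
    using hom by blast
  then show "f (snd (u, v)) + 1 \<noteq> f (snd (v, w)) + 1"
    using asympD[OF \<open>asymp T\<close>] by force
next
  fix u v w x y z
  assume "(u, v) \<in> A \<and> (v, w) \<in> A \<and> (x, y) \<in> A \<and> (y, z) \<in> A \<and>
    f (snd (v, w)) + 1 = f (snd (x, y)) + 1"
  then have "T (f v) (f w)" "T (f w) (f z)"
    using hom[of v w] hom[of y z] by simp_all
  then show "f (snd (u, v)) + 1 \<noteq> f (snd (y, z)) + 1"
    using asympD[OF \<open>asymp T\<close>] by force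
qed

lemma oriented_chromatic_index_le_of_hom:
  assumes "\<And>u v. (u, v) \<in> A \<Longrightarrow> T (f u) (f v)"
    and "\<And>a b. T a b \<Longrightarrow> a < n \<and> b < n" and "asymp T"
  shows "oriented_chromatic_index A \<le> n"
  unfolding oriented_chromatic_index_def
  by (rule Least_le) (rule exI, rule oriented_arc_coloring_of_hom[OF assms])

lemma orientation_asym:
  assumes "orientation E A"
  shows "asym A"
proof (rule asymI)
  fix u v assume "(u, v) \<in> A"
  moreover from this have "u \<noteq> v \<and> {u, v} \<in> E"
    using assms unfolding orientation_def by blast
  ultimately show "(v, u) \<notin> A"
    using assms unfolding orientation_def by blast
qed

theorem mainTheorem13:
  fixes V :: "'a set" and E :: "'a set set" and A :: "('a \<times> 'a) set"
  assumes "series_parallel V E"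
    and "orientation E A"
  shows "oriented_chromatic_index A \<le> 7"
proof -
  obtain s t where st: "sp_two_terminal V E s t"
    using assms(1) unfolding series_parallel_def by blast
  have "asym A"
    using assms(2) by (rule orientation_asym)
  obtain p q where pq: "p \<in> {..<7}" "q \<in> {..<7}" "p \<noteq> q"
    "(s, t) \<in> A \<longrightarrow> paley7 p q" "(t, s) \<in> A \<longrightarrow> paley7 q p"
  proof (cases "(s, t) \<in> A")
    case True
    then have "(t, s) \<notin> A"
      using asymD[OF \<open>asym A\<close>] by blast
    with True show ?thesis
      by (intro that[of 0 1]) (simp_all add: paley7_def)
  next
    case False
    then show ?thesis
      by (intro that[of 1 0]) (simp_all add: paley7_def)
  qed
  obtain f where f: "arc_hom_on A E paley7 f"
    using sp_two_terminal_arc_hom[OF st two_extension_property_paley7 asymp_paley7 \<open>asym A\<close> pq]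
    by blast
  have hom: "paley7 (f u) (f v)" if "(u, v) \<in> A" for u v
    using f that assms(2) unfolding arc_hom_on_def orientation_def by blast
  show ?thesis
    using hom paley7_less asymp_paley7 by (rule oriented_chromatic_index_le_of_hom)
qed

end
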